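(* Let $B_1,\ldots,B_r$ be size-$2$ subsets of $\mathbb Z_T$ with $r\ge T^3$. Then there exists a nontrivial subgroup $H\le\mathbb Z_T$ such that the multiset $B_1+B_2+\cdots+B_r$ has bias at most $4T^{3/2}/r^{1/2}$ with respect to $H$.
   Context: $\mathbb Z_T$ is the additive cyclic group of order $T$. For multisets $A,B$, $A+B=\{a+b:a\in A,b\in B\}$ as a multiset; $\mu_A(x)$ is the multiplicity of $x$ in $A$. A multiset $A$ has bias at most $\epsilon$ with respect to a subgroup $H$ if $\mu_A(a)\le(1+\epsilon)\mu_A(a+h)$ for all $a\in A$ and all $h\in H$. *)

theory Defs
  imports Complex_Main "HOL-Library.Multiset"
begin

text \<open>Z_T is modelled by the residues {0..<T} (as nat) with addition mod T.\<close>

definition msumset :: "nat \<Rightarrow> nat multiset \<Rightarrow> nat multiset \<Rightarrow> nat multiset" where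
  "msumset T A B = (\<Sum>a\<in>#A. image_mset (\<lambda>b. (a + b) mod T) B)"

fun iter_sumset :: "nat \<Rightarrow> (nat \<Rightarrow> nat set) \<Rightarrow> nat \<Rightarrow> nat multiset" where
  "iter_sumset T B 0 = {#0#}"
| "iter_sumset T B (Suc n) = msumset T (iter_sumset T B n) (mset_set (B n))"

definition zsubgroup :: "nat \<Rightarrow> nat set \<Rightarrow> bool" where
  "zsubgroup T H \<longleftrightarrow> H \<subseteq> {..<T} \<and> 0 \<in> H \<and>
     (\<forall>x\<in>H. \<forall>y\<in>H. (x + y) mod T \<in> H) \<and> (\<forall>x\<in>H. (T - x) mod T \<in> H)"

definition bias_at_most :: "nat \<Rightarrow> nat multiset \<Rightarrow> nat set \<Rightarrow> real \<Rightarrow> bool" where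
  "bias_at_most T A H \<epsilon> \<longleftrightarrow>
     (\<forall>a\<in>#A. \<forall>h\<in>H. real (count A a) \<le> (1 + \<epsilon>) * real (count A ((a + h) mod T)))"

end

theory Submission
  imports Defs "HOL-Number_Theory.Cong" "HOL-Library.FuncSet"
begin

text \<open>Write each B_i as {s_i, s_i + d_i} with 1 \<le> d_i \<le> T/2. Some difference d occurs for
  k \<ge> 2r/T indices, and since sumsets of multisets are associative and commutative, the iterated
  sumset is G + C with C the sum of k copies of {0, d}. The multiplicity of j d in C is the sum of
  the binomial coefficients C(k, i) over the residue class of j modulo the order m of d. By
  unimodality two such class sums differ by at most the central coefficient, which is at most
  2^k / sqrt k, while their average is 2^k / m; so at every point C is within a factor 1 + \<epsilon>
  of its translates by multiples of d. This pointwise ratio bound survives translation and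
  summation, so it passes to G + C, with H the subgroup generated by d.\<close>

lemma count_image_mset_inj_on:
  assumes "inj_on f S" "set_mset A \<subseteq> S" "x \<in> S"
  shows "count (image_mset f A) (f x) = count A x"
proof -
  have "f -` {f x} \<inter> set_mset A = (if x \<in># A then {x} else {})"
    using assms by (auto dest: inj_onD)
  then show ?thesis by (simp add: count_image_mset not_in_iff)
qed

lemma size_eq_sum_count:
  assumes "set_mset A \<subseteq> S" "finite S"
  shows "size A = sum (count A) S"
  unfolding size_multiset_overloaded_eq using assms
  by (intro sum.mono_neutral_left) (auto simp: count_eq_zero_iff)

lemma eq_if_mod_eq_and_close:
  fixes i j m :: nat
  assumes "i mod m = j mod m" "i < j + m" "j < i + m"
  shows "i = j"
proof -
  have "[i = j] (mod m)" using assms(1) by (simp add: cong_def)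
  then have "m dvd nat \<bar>int i - int j\<bar>" by (simp add: cong_altdef_nat')
  moreover have "nat \<bar>int i - int j\<bar> < m" using assms(2,3) by linarith
  ultimately have "nat \<bar>int i - int j\<bar> = 0" using nat_dvd_not_less by blast
  then show ?thesis by simp
qed

lemma card_Collect_less_Suc:
  "card {i. i < Suc n \<and> P i} = card {i. i < n \<and> P i} + (if P n then 1 else 0)"
proof -
  have "{i. i < Suc n \<and> P i} = (if P n then insert n {i. i < n \<and> P i} else {i. i < n \<and> P i})"
    by (auto simp: less_Suc_eq)
  then show ?thesis by simp
qed

lemma msumset_empty_left [simp]: "msumset T {#} B = {#}"
  by (simp add: msumset_def)

lemma msumset_add_mset_left [simp]:
  "msumset T (add_mset a A) B = image_mset (\<lambda>b. (a + b) mod T) B + msumset T A B"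
  by (simp add: msumset_def)

lemma msumset_plus_left: "msumset T (A + A') B = msumset T A B + msumset T A' B"
  by (simp add: msumset_def)

lemma msumset_empty_right [simp]: "msumset T A {#} = {#}"
  by (induction A) simp_all

lemma msumset_add_mset_right [simp]:
  "msumset T A (add_mset b B) = image_mset (\<lambda>a. (a + b) mod T) A + msumset T A B"
  by (induction A) simp_all

lemma msumset_commute: "msumset T A B = msumset T B A"
  by (induction A) (simp_all add: add.commute)

lemma msumset_image_translate_left:
  "msumset T (image_mset (\<lambda>b. (a + b) mod T) B) C = image_mset (\<lambda>y. (a + y) mod T) (msumset T B C)"
  by (induction B) (simp_all add: image_mset.compositionality o_def mod_simps add.assoc)

lemma msumset_assoc: "msumset T (msumset T A B) C = msumset T A (msumset T B C)"
  by (induction A) (simp_all add: msumset_plus_left msumset_image_translate_left)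

lemma msumset_interchange:
  "msumset T (msumset T A B) (msumset T C D) = msumset T (msumset T A C) (msumset T B D)"
  by (metis msumset_assoc msumset_commute)

lemma image_mset_mod_eq_self:
  "set_mset (A :: nat multiset) \<subseteq> {..<T} \<Longrightarrow> image_mset (\<lambda>a. a mod T) A = A"
  by (induction A) auto

lemma set_msumset_subset: "0 < T \<Longrightarrow> set_mset (msumset T A B) \<subseteq> {..<T}"
  by (induction A) auto

lemma set_iter_sumset_subset: "0 < T \<Longrightarrow> set_mset (iter_sumset T B n) \<subseteq> {..<T}"
  by (cases n) (simp_all add: set_msumset_subset)

lemma iter_sumset_split:
  assumes "\<And>i. i < n \<Longrightarrow> mset_set (B i) = msumset T (mset_set (B1 i)) (mset_set (B2 i))"
  shows "iter_sumset T B n = msumset T (iter_sumset T B1 n) (iter_sumset T B2 n)"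
  using assms
proof (induction n)
  case 0
  then show ?case by simp
next
  case (Suc n)
  then show ?case by (simp add: msumset_interchange)
qed

definition binomial_mset :: "nat \<Rightarrow> nat multiset" where
  "binomial_mset k = (\<Sum>i\<le>k. replicate_mset (k choose i) i)"

lemma count_binomial_mset [simp]: "count (binomial_mset k) i = k choose i"
  by (simp add: binomial_mset_def count_sum)

lemma set_mset_binomial_mset [simp]: "set_mset (binomial_mset k) = {..k}"
  by (auto simp: binomial_mset_def set_mset_sum)

lemma size_binomial_mset [simp]: "size (binomial_mset k) = 2 ^ k"
  by (simp add: binomial_mset_def choose_row_sum)

lemma binomial_mset_Suc:
  "binomial_mset (Suc k) = binomial_mset k + image_mset Suc (binomial_mset k)"
proof (rule multiset_eqI)
  fix i
  show "count (binomial_mset (Suc k)) i = count (binomial_mset k + image_mset Suc (binomial_mset k)) i"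
  proof (cases i)
    case 0
    have "count (image_mset Suc (binomial_mset k)) 0 = 0" by (auto simp: count_eq_zero_iff)
    then show ?thesis using 0 by simp
  next
    case (Suc j)
    then show ?thesis using count_image_mset_inj_on[of Suc UNIV "binomial_mset k" j] by simp
  qed
qed

lemma unimodal_residue_class_sum_le:
  fixes f :: "nat \<Rightarrow> nat"
  assumes "a < m" "b < m" "p \<le> n"
    and up: "\<And>i j. i \<le> j \<Longrightarrow> j \<le> p \<Longrightarrow> f i \<le> f j"
    and down: "\<And>i j. p \<le> i \<Longrightarrow> i \<le> j \<Longrightarrow> f j \<le> f i"
  shows "(\<Sum>i | i \<le> n \<and> i mod m = a. f i) \<le> (\<Sum>i | i \<le> n \<and> i mod m = b. f i) + f p"
proof -
  define Ia where "Ia = {i. i \<le> n \<and> i mod m = a}"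
  define Ib where "Ib = {i. i \<le> n \<and> i mod m = b}"
  define s where "s = (b + m - a) mod m"
  define Mid where "Mid = {i\<in>Ia. p < i + s \<and> i + s \<le> p + m}"
  define Out where "Out = Ia - Mid"
  \<comment> \<open>Indices of class a left of the peak move right by s, those beyond p + m - s move left
    by m - s; both moves land in class b without decreasing f. The indices left over (Mid) lie
    in a window of length m, so there is at most one of them.\<close>
  define \<phi> where "\<phi> i = (if i + s \<le> p then i + s else i + s - m)" for i
  have "s < m" using assms(1) by (simp add: s_def)
  have shift: "(i + s) mod m = b" if "i mod m = a" for i
  proof -
    have "(i + s) mod m = (i mod m + (b + m - a)) mod m"
      by (simp add: s_def mod_simps)
    also have "\<dots> = (a + (b + m - a)) mod m"
      using that by simp
    also have "\<dots> = b" using assms(1,2) by simp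
    finally show ?thesis .
  qed
  have fin: "finite Ia" "finite Ib" "finite Mid" by (auto simp: Ia_def Ib_def Mid_def)
  have \<phi>_Out: "\<phi> i \<in> Ib \<and> f i \<le> f (\<phi> i)" if "i \<in> Out" for i
  proof -
    have i: "i \<le> n" "i mod m = a" "i + s \<le> p \<or> p + m < i + s"
      using that by (auto simp: Out_def Ia_def Mid_def)
    show ?thesis
    proof (cases "i + s \<le> p")
      case True
      then show ?thesis using shift[OF i(2)] up[of i "i + s"] assms(3) by (simp add: \<phi>_def Ib_def)
    next
      case False
      then have "p + m < i + s" using i(3) by simp
      moreover have "(i + s - m) mod m = b" using calculation shift[OF i(2)] by (simp add: le_mod_geq)
      ultimately show ?thesis
        using False i(1) \<open>s < m\<close> down[of "i + s - m" i] by (simp add: \<phi>_def Ib_def)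
    qed
  qed
  have "inj_on \<phi> Out"
  proof (rule inj_onI)
    fix i j assume "i \<in> Out" "j \<in> Out" "\<phi> i = \<phi> j"
    then show "i = j" unfolding \<phi>_def Out_def Mid_def Ia_def by (simp split: if_splits)
  qed
  then have "sum f Out \<le> sum f Ib"
  proof -
    have "sum f Out \<le> sum (f \<circ> \<phi>) Out" using \<phi>_Out by (intro sum_mono) simp
    also have "\<dots> = sum f (\<phi> ` Out)" by (rule sum.reindex[symmetric]) fact
    also have "\<dots> \<le> sum f Ib" using \<phi>_Out fin by (intro sum_mono2) auto
    finally show ?thesis .
  qed
  moreover have "sum f Mid \<le> f p"
  proof -
    have "card Mid \<le> 1"
      unfolding card_le_Suc0_iff_eq[OF fin(3)] One_nat_def
    proof (intro ballI)
      fix i j assume "i \<in> Mid" "j \<in> Mid"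
      then show "i = j"
        by (intro eq_if_mod_eq_and_close[of i m j]) (auto simp: Mid_def Ia_def)
    qed
    moreover have "f i \<le> f p" for i
      using up[of i p] down[of p i] by (cases "i \<le> p") simp_all
    ultimately show ?thesis
      using sum_bounded_above[of Mid f "f p"] by (simp add: order_trans)
  qed
  moreover have "sum f Ia = sum f Out + sum f Mid"
    using fin by (simp add: Out_def Mid_def sum.subset_diff[of Mid Ia])
  ultimately show ?thesis unfolding Ia_def Ib_def by simp
qed

lemma count_binomial_mset_mod:
  "count (image_mset (\<lambda>i. i mod m) (binomial_mset k)) a = (\<Sum>i | i \<le> k \<and> i mod m = a. k choose i)"
proof -
  have "(\<lambda>i. i mod m) -` {a} \<inter> {..k} = {i. i \<le> k \<and> i mod m = a}" by auto
  then show ?thesis by (simp add: count_image_mset)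
qed

lemma binomial_residue_counts_close:
  assumes "a < m" "b < m"
  shows "count (image_mset (\<lambda>i. i mod m) (binomial_mset k)) a
           \<le> count (image_mset (\<lambda>i. i mod m) (binomial_mset k)) b + (k choose (k div 2))"
  unfolding count_binomial_mset_mod
proof (rule unimodal_residue_class_sum_le[OF assms])
  show "k choose i \<le> k choose j" if "i \<le> j" "j \<le> k div 2" for i j
    using that by (intro binomial_mono) auto
  show "k choose j \<le> k choose i" if "k div 2 \<le> i" "i \<le> j" for i j
    using that by (cases "j \<le> k") (simp_all add: binomial_antimono binomial_eq_0)
qed simp

lemma binomial_residue_count_lower:
  assumes "b < m"
  shows "2 ^ k \<le> m * (count (image_mset (\<lambda>i. i mod m) (binomial_mset k)) b + (k choose (k div 2)))"
proof -
  let ?\<rho> = "image_mset (\<lambda>i. i mod m) (binomial_mset k)"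
  have "set_mset ?\<rho> \<subseteq> {..<m}" using assms by auto
  then have "2 ^ k = (\<Sum>a<m. count ?\<rho> a)"
    using size_eq_sum_count[of ?\<rho> "{..<m}"] by simp
  also have "\<dots> \<le> (\<Sum>a<m. count ?\<rho> b + (k choose (k div 2)))"
    using assms by (intro sum_mono binomial_residue_counts_close) auto
  finally show ?thesis by simp
qed

lemma central_binomial_Suc:
  "Suc n * (Suc (Suc (2 * n)) choose Suc n) = 2 * (2 * n + 1) * (2 * n choose n)"
proof -
  have step1: "Suc n * (Suc (2 * n) choose Suc n) = Suc (2 * n) * (2 * n choose n)"
    by (rule Suc_times_binomial)
  have step2: "Suc n * (Suc (Suc (2 * n)) choose Suc n) = Suc (Suc (2 * n)) * (Suc (2 * n) choose n)"
    by (rule Suc_times_binomial)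
  have sym: "Suc (2 * n) choose n = Suc (2 * n) choose Suc n"
    using binomial_symmetric[of n "Suc (2 * n)"] by (simp del: binomial_Suc_Suc)
  have "Suc n * (Suc n * (Suc (Suc (2 * n)) choose Suc n))
      = Suc (Suc (2 * n)) * (Suc n * (Suc (2 * n) choose Suc n))"
    unfolding step2 sym by (simp only: mult_ac)
  also have "\<dots> = Suc n * (2 * (2 * n + 1) * (2 * n choose n))"
    unfolding step1 by (simp del: binomial_Suc_Suc)
  finally show ?thesis by (simp only: mult_left_cancel)
qed

lemma central_binomial_sq_le: "(3 * n + 1) * (2 * n choose n)\<^sup>2 \<le> 16 ^ n"
proof (induction n)
  case (Suc n)
  define a where "a = 2 * n choose n"
  define b where "b = Suc (Suc (2 * n)) choose Suc n"
  have b: "(n + 1) * b = 2 * (2 * n + 1) * a"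
    using central_binomial_Suc[of n] by (simp add: a_def b_def)
  have "(n + 1)\<^sup>2 * ((3 * n + 4) * b\<^sup>2) = (3 * n + 4) * ((n + 1) * b)\<^sup>2"
    by (simp only: power_mult_distrib mult_ac)
  also have "\<dots> = 4 * ((2 * n + 1)\<^sup>2 * (3 * n + 4)) * a\<^sup>2"
    unfolding b by (simp add: power2_eq_square algebra_simps)
  also have "\<dots> \<le> 16 * (n + 1)\<^sup>2 * ((3 * n + 1) * a\<^sup>2)"
    by (simp add: power2_eq_square algebra_simps)
  also have "\<dots> \<le> (n + 1)\<^sup>2 * 16 ^ Suc n"
    using Suc.IH by (simp add: a_def)
  finally have "(3 * n + 4) * b\<^sup>2 \<le> 16 ^ Suc n" by simp
  moreover have "3 * Suc n + 1 = 3 * n + 4" "2 * Suc n = Suc (Suc (2 * n))" by simp_all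
  ultimately show ?case by (simp only: b_def)
qed simp

lemma middle_binomial_sq_le: "k * (k choose (k div 2))\<^sup>2 \<le> 4 ^ k"
proof (cases "even k")
  case True
  then obtain n where k: "k = 2 * n" by blast
  have "k * (k choose (k div 2))\<^sup>2 \<le> (3 * n + 1) * (2 * n choose n)\<^sup>2" by (simp add: k)
  also have "\<dots> \<le> 16 ^ n" by (rule central_binomial_sq_le)
  finally show ?thesis by (simp add: k power_mult)
next
  case False
  then obtain n where k: "k = Suc (2 * n)" using oddE by fastforce
  define c where "c = Suc (2 * n) choose n"
  have "Suc (2 * n) choose Suc n = c"
    using binomial_symmetric[of n "Suc (2 * n)"] by (simp add: c_def del: binomial_Suc_Suc)
  then have twice: "Suc (Suc (2 * n)) choose Suc n = 2 * c" by (simp add: c_def)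
  have "4 * (k * c\<^sup>2) = (2 * n + 1) * (Suc (Suc (2 * n)) choose Suc n)\<^sup>2"
    unfolding twice by (simp add: k power2_eq_square)
  also have "\<dots> \<le> (3 * Suc n + 1) * (Suc (Suc (2 * n)) choose Suc n)\<^sup>2"
    by (intro mult_right_mono) simp_all
  also have "\<dots> \<le> 16 ^ Suc n"
    using central_binomial_sq_le[of "Suc n"] by (simp only: mult_2 add_Suc add_Suc_right)
  also have "\<dots> = 4 * 4 ^ k"
    by (simp add: k power_mult)
  finally show ?thesis by (simp add: k c_def)
qed

lemma bias_parameter_bounds:
  fixes T r k :: nat
  defines "\<epsilon> \<equiv> 4 * real T powr (3/2) / sqrt (real r)"
  assumes "1 \<le> T" "T ^ 3 \<le> r" "2 * r \<le> k * T"
  shows "\<epsilon> \<le> 4" and "25 * (real T)\<^sup>2 \<le> \<epsilon>\<^sup>2 * real k"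
proof -
  have "1 \<le> T ^ 3" using assms(2) by simp
  then have "0 < r" using assms(3) by linarith
  have "(real T powr (3/2))\<^sup>2 = real T ^ 3"
    using assms(2) by (simp add: power2_eq_square powr_add[symmetric])
  then have \<epsilon>_sq: "\<epsilon>\<^sup>2 = 16 * real T ^ 3 / real r"
    using \<open>0 < r\<close> by (simp add: \<epsilon>_def power_divide power_mult_distrib)
  have "\<epsilon>\<^sup>2 \<le> 4\<^sup>2"
    using assms(3) \<open>0 < r\<close> by (simp add: \<epsilon>_sq divide_le_eq flip: of_nat_power)
  then show "\<epsilon> \<le> 4" using power2_le_imp_le[of \<epsilon> 4] by simp
  have "real (2 * r) \<le> real (T * k)" using assms(4) by (simp only: of_nat_le_iff mult.commute)
  then have "25 * real r \<le> 16 * real T * real k" by simp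
  then have "(real T)\<^sup>2 * (25 * real r) \<le> (real T)\<^sup>2 * (16 * real T * real k)"
    by (rule mult_left_mono) simp
  then have "25 * (real T)\<^sup>2 * real r \<le> 16 * real T ^ 3 * real k"
    by (simp add: power2_eq_square power3_eq_cube algebra_simps)
  then show "25 * (real T)\<^sup>2 \<le> \<epsilon>\<^sup>2 * real k"
    using \<open>0 < r\<close> by (simp add: \<epsilon>_sq field_simps)
qed

lemma middle_binomial_bias_bound:
  fixes T r k :: nat
  defines "\<epsilon> \<equiv> 4 * real T powr (3/2) / sqrt (real r)"
  assumes "1 \<le> T" "T ^ 3 \<le> r" "2 * r \<le> k * T"
  shows "real (T * (k choose (k div 2))) * (1 + \<epsilon>) \<le> \<epsilon> * 2 ^ k"
proof -
  define M where "M = k choose (k div 2)"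
  note \<epsilon>_bounds = bias_parameter_bounds[OF assms(2-4), folded \<epsilon>_def]
  have "0 \<le> \<epsilon>" by (simp add: \<epsilon>_def)
  have M_le: "real k * (real M)\<^sup>2 \<le> 4 ^ k"
    using middle_binomial_sq_le[of k] unfolding M_def by (simp flip: of_nat_power of_nat_mult)
  have "(5 * real T * real M)\<^sup>2 = 25 * (real T)\<^sup>2 * (real M)\<^sup>2"
    by (simp add: power_mult_distrib)
  also have "\<dots> \<le> \<epsilon>\<^sup>2 * real k * (real M)\<^sup>2"
    using \<epsilon>_bounds(2) by (rule mult_right_mono) simp
  also have "\<dots> \<le> \<epsilon>\<^sup>2 * 4 ^ k"
    using M_le by (simp add: mult.assoc mult_left_mono)
  also have "\<dots> = (\<epsilon> * 2 ^ k)\<^sup>2"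
    by (simp add: power_mult_distrib power2_eq_square flip: power_mult_distrib)
  finally have sq: "(5 * real T * real M)\<^sup>2 \<le> (\<epsilon> * 2 ^ k)\<^sup>2" .
  have "real (T * M) * (1 + \<epsilon>) \<le> real (T * M) * 5"
    using \<epsilon>_bounds(1) by (intro mult_left_mono) simp_all
  also have "\<dots> = 5 * real T * real M" by simp
  also have "\<dots> \<le> \<epsilon> * 2 ^ k"
    using power2_le_imp_le[OF sq] \<open>0 \<le> \<epsilon>\<close> by simp
  finally show ?thesis by (simp only: M_def)
qed

lemma binomial_residue_counts_ratio:
  fixes m k :: nat and \<epsilon> :: real
  assumes "a < m" "b < m" "0 \<le> \<epsilon>"
    and bound: "real (m * (k choose (k div 2))) * (1 + \<epsilon>) \<le> \<epsilon> * 2 ^ k"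
  shows "real (count (image_mset (\<lambda>i. i mod m) (binomial_mset k)) a)
           \<le> (1 + \<epsilon>) * real (count (image_mset (\<lambda>i. i mod m) (binomial_mset k)) b)"
proof -
  define M where "M = k choose (k div 2)"
  define c where "c x = real (count (image_mset (\<lambda>i. i mod m) (binomial_mset k)) x)" for x
  have "real m * M * (1 + \<epsilon>) \<le> \<epsilon> * (real m * (c b + M))"
  proof -
    have "real (2 ^ k) \<le> real (m * (count (image_mset (\<lambda>i. i mod m) (binomial_mset k)) b + M))"
      using binomial_residue_count_lower[OF assms(2), of k] unfolding M_def by (simp only: of_nat_le_iff)
    then have "\<epsilon> * 2 ^ k \<le> \<epsilon> * (real m * (c b + M))"
      using assms(3) by (intro mult_left_mono) (simp_all add: c_def)
    then show ?thesis using bound unfolding M_def by simp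
  qed
  then have "real m * M \<le> real m * (\<epsilon> * c b)" by (simp add: algebra_simps)
  then have "M \<le> \<epsilon> * c b" using assms(2) by simp
  moreover have "c a \<le> c b + M"
    using binomial_residue_counts_close[OF assms(1,2), of k] unfolding c_def M_def by simp
  ultimately show ?thesis unfolding c_def by (simp add: algebra_simps)
qed

lemma mult_cong_iff_cong_div_gcd:
  fixes a b d T :: nat
  assumes "0 < T"
  shows "[a * d = b * d] (mod T) \<longleftrightarrow> [a = b] (mod T div gcd T d)"
proof -
  define g where "g = gcd T d"
  have "0 < g" using assms by (simp add: g_def)
  obtain T' d' where T': "T = T' * g" "d = d' * g" "coprime T' d'"
    using gcd_coprime_exists[of T d] \<open>0 < g\<close> unfolding g_def by auto
  have "[a * d = b * d] (mod T) \<longleftrightarrow> [(a * d') * g = (b * d') * g] (mod T' * g)"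
    by (simp add: T' mult.assoc)
  also have "\<dots> \<longleftrightarrow> [a * d' = b * d'] (mod T')"
    using \<open>0 < g\<close> by (simp add: cong_def)
  also have "\<dots> \<longleftrightarrow> [a = b] (mod T')"
    using T'(3) by (simp add: cong_mult_rcancel_nat coprime_commute)
  moreover have "T div gcd T d = T'"
    unfolding g_def[symmetric] using \<open>0 < g\<close> by (simp add: T'(1))
  ultimately show ?thesis by simp
qed

lemma mod_div_gcd_mult_mod:
  fixes i d T :: nat
  assumes "0 < T"
  shows "((i mod (T div gcd T d)) * d) mod T = (i * d) mod T"
  using mult_cong_iff_cong_div_gcd[OF assms, of "i mod (T div gcd T d)" d i]
  by (simp add: cong_def)

lemma zsubgroup_multiples:
  fixes d T :: nat
  assumes "0 < T"
  shows "zsubgroup T (range (\<lambda>j. (j * d) mod T))"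
  unfolding zsubgroup_def
proof (intro conjI ballI)
  show "range (\<lambda>j. (j * d) mod T) \<subseteq> {..<T}" using assms by auto
  show "0 \<in> range (\<lambda>j. (j * d) mod T)" by (rule range_eqI[where x = 0]) simp
next
  fix x y assume "x \<in> range (\<lambda>j. (j * d) mod T)" "y \<in> range (\<lambda>j. (j * d) mod T)"
  then obtain i j where "x = (i * d) mod T" "y = (j * d) mod T" by auto
  then have "(x + y) mod T = ((i + j) * d) mod T" by (simp add: mod_simps distrib_right)
  then show "(x + y) mod T \<in> range (\<lambda>j. (j * d) mod T)" by (rule range_eqI)
next
  fix x assume "x \<in> range (\<lambda>j. (j * d) mod T)"
  then obtain i where x: "x = (i * d) mod T" by auto
  have "[T - x + i * d = T - x + x] (mod T)" by (simp add: x cong_def mod_simps)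
  also have "T - x + x = T * 1" using x assms by simp
  also have "[T * 1 = T * (i * d)] (mod T)" by (simp add: cong_def)
  also have "T * (i * d) = (T - 1) * i * d + i * d" using assms by (cases T) simp_all
  finally have "[T - x = (T - 1) * i * d] (mod T)" by (simp only: cong_add_rcancel_nat)
  then have "(T - x) mod T = ((T - 1) * i * d) mod T" by (simp add: cong_def)
  then show "(T - x) mod T \<in> range (\<lambda>j. (j * d) mod T)" by (rule range_eqI)
qed

text \<open>Requiring the ratio bound at every residue, not only on the support, makes it stable
  under translations and sums of multisets.\<close>

definition bias_everywhere_at_most :: "nat \<Rightarrow> nat multiset \<Rightarrow> nat set \<Rightarrow> real \<Rightarrow> bool" where
  "bias_everywhere_at_most T A H \<epsilon> \<longleftrightarrow>
     (\<forall>x<T. \<forall>h\<in>H. real (count A x) \<le> (1 + \<epsilon>) * real (count A ((x + h) mod T)))"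

lemma bias_at_most_if_everywhere:
  assumes "set_mset A \<subseteq> {..<T}" "bias_everywhere_at_most T A H \<epsilon>"
  shows "bias_at_most T A H \<epsilon>"
  using assms unfolding bias_at_most_def bias_everywhere_at_most_def by blast

lemma bias_everywhere_empty [simp]: "bias_everywhere_at_most T {#} H \<epsilon>"
  by (simp add: bias_everywhere_at_most_def)

lemma bias_everywhere_plus:
  assumes "bias_everywhere_at_most T A H \<epsilon>" "bias_everywhere_at_most T A' H \<epsilon>"
  shows "bias_everywhere_at_most T (A + A') H \<epsilon>"
  using assms by (simp add: bias_everywhere_at_most_def distrib_left add_mono)

lemma bij_betw_translate_mod:
  fixes g T :: nat
  assumes "0 < T"
  shows "bij_betw (\<lambda>a. (g + a) mod T) {..<T} {..<T}"
proof -
  have inj: "inj_on (\<lambda>a. (g + a) mod T) {..<T}"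
  proof (rule inj_onI)
    fix a b assume "a \<in> {..<T}" "b \<in> {..<T}" "(g + a) mod T = (g + b) mod T"
    then show "a = b"
      using cong_add_lcancel_nat[of g a b T] cong_less_modulus_unique_nat[of a b T]
      by (simp add: cong_def)
  qed
  moreover have "(\<lambda>a. (g + a) mod T) ` {..<T} = {..<T}"
    by (rule endo_inj_surj) (use inj assms in auto)
  ultimately show ?thesis by (simp add: bij_betw_def)
qed

lemma bias_everywhere_translate:
  assumes "0 < T" "set_mset A \<subseteq> {..<T}" "bias_everywhere_at_most T A H \<epsilon>"
  shows "bias_everywhere_at_most T (image_mset (\<lambda>a. (g + a) mod T) A) H \<epsilon>"
  unfolding bias_everywhere_at_most_def
proof (intro allI impI ballI)
  let ?\<tau> = "\<lambda>a. (g + a) mod T"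
  fix z h assume "z < T" "h \<in> H"
  have bij: "bij_betw ?\<tau> {..<T} {..<T}" by (rule bij_betw_translate_mod[OF assms(1)])
  have "z \<in> ?\<tau> ` {..<T}" using bij \<open>z < T\<close> by (simp add: bij_betw_def)
  then obtain y where y: "y < T" "z = ?\<tau> y" by auto
  have count_\<tau>: "count (image_mset ?\<tau> A) (?\<tau> x) = count A x" if "x < T" for x
    using count_image_mset_inj_on[OF bij_betw_imp_inj_on[OF bij] assms(2)] that by simp
  have "(z + h) mod T = ?\<tau> ((y + h) mod T)" by (simp add: y(2) mod_simps add.assoc)
  moreover have "real (count A y) \<le> (1 + \<epsilon>) * real (count A ((y + h) mod T))"
    using assms(3) y(1) \<open>h \<in> H\<close> by (simp add: bias_everywhere_at_most_def)
  ultimately show "real (count (image_mset ?\<tau> A) z)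
      \<le> (1 + \<epsilon>) * real (count (image_mset ?\<tau> A) ((z + h) mod T))"
    using assms(1) y by (simp add: count_\<tau>)
qed

lemma bias_everywhere_msumset:
  assumes "0 < T" "set_mset A \<subseteq> {..<T}" "bias_everywhere_at_most T A H \<epsilon>"
  shows "bias_everywhere_at_most T (msumset T G A) H \<epsilon>"
proof (induction G)
  case (add g G)
  have "msumset T (add_mset g G) A = image_mset (\<lambda>a. (g + a) mod T) A + msumset T G A" by simp
  then show ?case using bias_everywhere_plus[OF bias_everywhere_translate[OF assms] add.IH] by simp
qed simp

lemma bias_everywhere_image_mult:
  fixes M :: "nat multiset" and d T :: nat
  defines "m \<equiv> T div gcd T d"
  assumes "0 < T" "0 \<le> \<epsilon>"
    and flat: "\<And>a b. a < m \<Longrightarrow> b < m \<Longrightarrow>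
      real (count (image_mset (\<lambda>i. i mod m) M) a)
        \<le> (1 + \<epsilon>) * real (count (image_mset (\<lambda>i. i mod m) M) b)"
  shows "bias_everywhere_at_most T (image_mset (\<lambda>i. (i * d) mod T) M)
           (range (\<lambda>j. (j * d) mod T)) \<epsilon>"
  unfolding bias_everywhere_at_most_def
proof (intro allI impI ballI)
  \<comment> \<open>m is the order of d in Z_T, so a \<mapsto> a d maps Z_m bijectively onto the multiples of d.\<close>
  define \<rho> where "\<rho> = image_mset (\<lambda>i. i mod m) M"
  define \<phi> where "\<phi> a = (a * d) mod T" for a
  have "0 < m" using assms(2) by (simp add: m_def div_greater_zero_iff)
  have \<phi>_mod: "\<phi> (i mod m) = \<phi> i" for i
    using mod_div_gcd_mult_mod[OF assms(2)] by (simp add: \<phi>_def m_def)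
  have image_eq: "image_mset (\<lambda>i. (i * d) mod T) M = image_mset \<phi> \<rho>"
    by (simp add: \<rho>_def image_mset.compositionality o_def \<phi>_mod) (simp add: \<phi>_def)
  have \<rho>_sub: "set_mset \<rho> \<subseteq> {..<m}" using \<open>0 < m\<close> by (auto simp: \<rho>_def)
  have "inj_on \<phi> {..<m}"
  proof (rule inj_onI)
    fix a b assume "a \<in> {..<m}" "b \<in> {..<m}" "\<phi> a = \<phi> b"
    then show "a = b"
      using mult_cong_iff_cong_div_gcd[OF assms(2), of a d b] cong_less_modulus_unique_nat[of a b m]
      by (simp add: \<phi>_def cong_def m_def)
  qed
  note count_\<phi> = count_image_mset_inj_on[OF this \<rho>_sub]
  fix z h assume "z < T" "h \<in> range (\<lambda>j. (j * d) mod T)"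
  then obtain j where h: "h = \<phi> j" by (auto simp: \<phi>_def)
  show "real (count (image_mset (\<lambda>i. (i * d) mod T) M) z)
    \<le> (1 + \<epsilon>) * real (count (image_mset (\<lambda>i. (i * d) mod T) M) ((z + h) mod T))"
  proof (cases "z \<in> \<phi> ` {..<m}")
    case True
    then obtain a where a: "a < m" "z = \<phi> a" by auto
    have "(z + h) mod T = \<phi> ((a + j) mod m)"
      by (simp add: a(2) h \<phi>_mod) (simp add: \<phi>_def mod_simps distrib_right)
    then show ?thesis
      using flat[of a "(a + j) mod m", folded \<rho>_def] a \<open>0 < m\<close> by (simp add: image_eq count_\<phi>)
  next
    case False
    then have "count (image_mset \<phi> \<rho>) z = 0" using \<rho>_sub by (auto simp: count_eq_zero_iff)
    then show ?thesis using assms(3) by (simp add: image_eq)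
  qed
qed

lemma bias_everywhere_binomial_multiples:
  fixes T r k d :: nat
  assumes "1 \<le> T" "T ^ 3 \<le> r" "2 * r \<le> k * T"
  shows "bias_everywhere_at_most T (image_mset (\<lambda>i. (i * d) mod T) (binomial_mset k))
           (range (\<lambda>j. (j * d) mod T)) (4 * real T powr (3/2) / sqrt (real r))"
proof (rule bias_everywhere_image_mult)
  let ?\<epsilon> = "4 * real T powr (3/2) / sqrt (real r)"
  show "0 < T" "0 \<le> ?\<epsilon>" using assms(1) by simp_all
  have "T div gcd T d \<le> T" by simp
  then have "real (T div gcd T d * (k choose (k div 2))) * (1 + ?\<epsilon>)
      \<le> real (T * (k choose (k div 2))) * (1 + ?\<epsilon>)"
    by (intro mult_right_mono) simp_all
  also have "\<dots> \<le> ?\<epsilon> * 2 ^ k" by (rule middle_binomial_bias_bound[OF assms])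
  finally show "real (count (image_mset (\<lambda>i. i mod (T div gcd T d)) (binomial_mset k)) a)
      \<le> (1 + ?\<epsilon>) * real (count (image_mset (\<lambda>i. i mod (T div gcd T d)) (binomial_mset k)) b)"
    if "a < T div gcd T d" "b < T div gcd T d" for a b
    using that by (intro binomial_residue_counts_ratio) simp_all
qed

lemma iter_sumset_multiples:
  fixes d T :: nat
  assumes "0 < d"
  shows "iter_sumset T (\<lambda>i. if P i then {0, d} else {0}) n
           = image_mset (\<lambda>i. (i * d) mod T) (binomial_mset (card {i. i < n \<and> P i}))"
proof (induction n)
  case 0
  then show ?case by (simp add: binomial_mset_def)
next
  case (Suc n)
  show ?case
  proof (cases "P n")
    case True
    then show ?thesis
      using Suc assms
      by (simp add: card_Collect_less_Suc binomial_mset_Suc image_mset.compositionality o_def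
          mod_simps add.commute)
  next
    case False
    then show ?thesis using Suc by (simp add: card_Collect_less_Suc image_mset.compositionality o_def)
  qed
qed

lemma iter_sumset_split_common_difference:
  fixes d T :: nat
  assumes "0 < d" "d < T"
    and "\<And>i. i < r \<Longrightarrow> B i \<subseteq> {..<T}"
    and "\<And>i. i < r \<Longrightarrow> P i \<Longrightarrow> S i < T \<and> B i = {S i, (S i + d) mod T}"
  shows "iter_sumset T B r = msumset T (iter_sumset T (\<lambda>i. if P i then {S i} else B i) r)
           (image_mset (\<lambda>i. (i * d) mod T) (binomial_mset (card {i. i < r \<and> P i})))"
proof -
  have "mset_set (B i)
      = msumset T (mset_set (if P i then {0, d} else {0})) (mset_set (if P i then {S i} else B i))"
    if "i < r" for i
  proof (cases "P i")
    case True
    then have S: "S i < T" "B i = {S i, (S i + d) mod T}" using assms(4) that by auto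
    have "S i \<noteq> (S i + d) mod T"
    proof
      assume "S i = (S i + d) mod T"
      then have "[S i + 0 = S i + d] (mod T)" by (simp add: cong_def S(1))
      then have "[0 = d] (mod T)" by (simp only: cong_add_lcancel_nat)
      then show False using assms(1,2) by (simp add: cong_def)
    qed
    then show ?thesis using True S assms(1) by (simp add: add.commute)
  next
    case False
    then show ?thesis
      using assms(3)[OF that] by (simp add: image_mset_mod_eq_self finite_subset[of _ "{..<T}"])
  qed
  then show ?thesis
    by (simp add: iter_sumset_split[of r B T] iter_sumset_multiples[OF assms(1)] msumset_commute)
qed

lemma two_subset_as_shifted_pair:
  fixes T :: nat
  assumes "A \<subseteq> {..<T}" "card A = 2"
  shows "\<exists>s d. s < T \<and> d \<in> {1..T div 2} \<and> A = {s, (s + d) mod T}"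
proof -
  obtain p q where A: "A = {p, q}" "p < q"
    using assms(2) by (auto simp: card_2_iff) (metis insert_commute linorder_neqE_nat)
  have "p < T" "q < T" using assms(1) A(1) by auto
  show ?thesis
  proof (cases "q - p \<le> T div 2")
    case True
    then have "A = {p, (p + (q - p)) mod T}" using A \<open>q < T\<close> by simp
    then show ?thesis using True A(2) \<open>p < T\<close> by (intro exI[of _ p] exI[of _ "q - p"]) simp
  next
    case False
    have "(q + (T - (q - p))) mod T = p" using A(2) \<open>p < T\<close> \<open>q < T\<close> by simp
    then have "A = {q, (q + (T - (q - p))) mod T}" using A(1) by auto
    moreover have "T - (q - p) \<in> {1..T div 2}" using False \<open>q < T\<close> by auto
    ultimately show ?thesis using \<open>q < T\<close> by blast
  qed
qed

lemma iter_sumset_has_binomial_factor: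
  fixes T r :: nat and B :: "nat \<Rightarrow> nat set"
  assumes "0 < r" and "\<And>i. i < r \<Longrightarrow> B i \<subseteq> {..<T} \<and> card (B i) = 2"
  obtains d k G where "0 < d" "d < T" "2 * r \<le> k * T"
    and "iter_sumset T B r = msumset T G (image_mset (\<lambda>i. (i * d) mod T) (binomial_mset k))"
proof -
  have "\<forall>i<r. \<exists>s d. s < T \<and> d \<in> {1..T div 2} \<and> B i = {s, (s + d) mod T}"
    using two_subset_as_shifted_pair assms(2) by blast
  then obtain S D where SD:
    "\<And>i. i < r \<Longrightarrow> S i < T \<and> D i \<in> {1..T div 2} \<and> B i = {S i, (S i + D i) mod T}"
    by metis
  obtain d where d: "d \<in> {1..T div 2}"
    and frequent: "r \<le> card (D -` {d} \<inter> {..<r}) * card {1..T div 2}"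
    using pigeonhole_card[of D "{..<r}" "{1..T div 2}"] SD assms(1) by fastforce
  define P where "P i \<longleftrightarrow> D i = d" for i
  define k where "k = card {i. i < r \<and> P i}"
  have "D -` {d} \<inter> {..<r} = {i. i < r \<and> P i}" by (auto simp: P_def)
  then have "2 * r \<le> k * (2 * (T div 2))"
    using frequent by (simp add: k_def)
  also have "\<dots> \<le> k * T" by (intro mult_le_mono2) simp
  finally have "2 * r \<le> k * T" .
  have "0 < d" "d < T" using d by auto
  have "iter_sumset T B r = msumset T (iter_sumset T (\<lambda>i. if P i then {S i} else B i) r)
      (image_mset (\<lambda>i. (i * d) mod T) (binomial_mset k))"
    unfolding k_def using SD assms(2) \<open>0 < d\<close> \<open>d < T\<close>
    by (intro iter_sumset_split_common_difference) (auto simp: P_def)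
  with \<open>0 < d\<close> \<open>d < T\<close> \<open>2 * r \<le> k * T\<close> show thesis by (rule that)
qed

theorem lemma7:
  fixes T r :: nat and B :: "nat \<Rightarrow> nat set"
  assumes "T \<ge> 1"
    and "\<And>i. i < r \<Longrightarrow> B i \<subseteq> {..<T} \<and> card (B i) = 2"
    and "r \<ge> T ^ 3"
  shows "\<exists>H. zsubgroup T H \<and> H \<noteq> {0} \<and>
           bias_at_most T (iter_sumset T B r) H (4 * real T powr (3/2) / sqrt (real r))"
proof -
  let ?\<epsilon> = "4 * real T powr (3/2) / sqrt (real r)"
  have "0 < T" using assms(1) by simp
  have "1 \<le> T ^ 3" using assms(1) by simp
  then have "0 < r" using assms(3) by linarith
  then obtain d k G where d: "0 < d" "d < T" and k: "2 * r \<le> k * T"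
    and split: "iter_sumset T B r = msumset T G (image_mset (\<lambda>i. (i * d) mod T) (binomial_mset k))"
    by (rule iter_sumset_has_binomial_factor[OF _ assms(2)])
  let ?H = "range (\<lambda>j. (j * d) mod T)"
  have "bias_everywhere_at_most T (image_mset (\<lambda>i. (i * d) mod T) (binomial_mset k)) ?H ?\<epsilon>"
    using assms(1,3) k by (rule bias_everywhere_binomial_multiples)
  then have "bias_everywhere_at_most T (iter_sumset T B r) ?H ?\<epsilon>"
    unfolding split using \<open>0 < T\<close> by (intro bias_everywhere_msumset) auto
  then have "bias_at_most T (iter_sumset T B r) ?H ?\<epsilon>"
    by (intro bias_at_most_if_everywhere set_iter_sumset_subset \<open>0 < T\<close>)
  moreover have "?H \<noteq> {0}"
  proof
    assume "?H = {0}"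
    then have "(1 * d) mod T = 0" by blast
    then show False using d by simp
  qed
  ultimately show ?thesis using zsubgroup_multiples[OF \<open>0 < T\<close>] by (intro exI[of _ ?H] conjI)
qed

end
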